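(* Let $p\in\mathbb{F}_2[x_1,\dots,x_n]$ be a uniformly chosen polynomial of degree $3$. Then the probability that there exists an affine subspace $A\subset\mathbb{F}_2^n$ of co-dimension at most $t=n-n^{3/4}$ such that $p$ restricted to $A$ has degree at most $2$ is at most $2^{-\Omega(n^2)}$.
   Context: Polynomials are taken as Boolean functions in algebraic normal form (sums of multilinear monomials). The restriction of $p$ to an affine subspace $A$ given by independent affine equations $\ell_1,\dots,\ell_{t'}$ is obtained by successively using each $\ell_j$ to eliminate one variable (substituting it by an affine expression in the others) and reducing to algebraic normal form; its degree does not depend on which variables are eliminated. *)

theory Defs
  imports Complex_Main
begin

text \<open>A point of F_2^n is encoded by its support, a subset of {..<n}.
A multilinear monomial is encoded by its set of variables. A Boolean polynomial in
algebraic normal form (over F_2, variables x_0..x_(n-1)) is a finite set of monomials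
(those with coefficient 1).\<close>

definition points :: "nat \<Rightarrow> nat set set" where
  "points n = Pow {..<n}"

definition eval_poly :: "nat set set \<Rightarrow> nat set \<Rightarrow> bool" where
  "eval_poly P x = odd (card {m \<in> P. m \<subseteq> x})"

definition polys_deg_le :: "nat \<Rightarrow> nat \<Rightarrow> nat set set set" where
  "polys_deg_le n d = Pow {m. m \<subseteq> {..<n} \<and> card m \<le> d}"

text \<open>Affine subspace of codimension at most k: nonempty solution set of
k affine equations  sum_{i in a j} x_i = b j  (mod 2).\<close>
definition affine_codim_le :: "nat \<Rightarrow> nat \<Rightarrow> nat set set \<Rightarrow> bool" where
  "affine_codim_le n k A \<longleftrightarrow> A \<noteq> {} \<and>
     (\<exists>a b. (\<forall>j<k. a j \<subseteq> {..<n}) \<and>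
        A = {x \<in> points n. \<forall>j<k. odd (card (a j \<inter> x)) = b j})"

text \<open>ANF coefficient of the monomial m of a Boolean function f on the cube over
free variables (Moebius inversion), and degree bound of a Boolean function on
the cube Pow S.\<close>
definition anf_coeff :: "(nat set \<Rightarrow> bool) \<Rightarrow> nat set \<Rightarrow> bool" where
  "anf_coeff f m = odd (card {y. y \<subseteq> m \<and> f y})"

definition fun_deg_le :: "nat set \<Rightarrow> (nat set \<Rightarrow> bool) \<Rightarrow> nat \<Rightarrow> bool" where
  "fun_deg_le S f d \<longleftrightarrow> (\<forall>m \<subseteq> S. d < card m \<longrightarrow> \<not> anf_coeff f m)"

text \<open>Restriction of P to A has degree at most d: eliminating the variables outside
a set S of free variables (each point of A is determined by its free coordinates,
the eliminated ones being affine in the free ones), the resulting function of the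
free variables has ANF degree at most d.  The degree does not depend on the choice
of S.\<close>
definition restr_deg_le :: "nat \<Rightarrow> nat set set \<Rightarrow> nat set set \<Rightarrow> nat \<Rightarrow> bool" where
  "restr_deg_le n P A d \<longleftrightarrow>
     (\<exists>S \<subseteq> {..<n}. (\<forall>y \<subseteq> S. \<exists>!x. x \<in> A \<and> x \<inter> S = y) \<and>
        fun_deg_le S (\<lambda>y. eval_poly P (THE x. x \<in> A \<and> x \<inter> S = y)) d)"

definition bad_cubics :: "nat \<Rightarrow> nat set set set" where
  "bad_cubics n = {P \<in> polys_deg_le n 3.
      \<exists>k A. real k \<le> real n - real n powr (3/4) \<and> affine_codim_le n k A \<and>
            restr_deg_le n P A 2}"

end

theory Submission
  imports Defs "HOL-Real_Asymp.Real_Asymp"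
begin

text \<open>Fix an affine subspace \<open>A\<close> together with a set \<open>S\<close> of free coordinates for it.
  Reading the restriction of a polynomial to \<open>A\<close> in the coordinates \<open>S\<close> is linear and fixes
  polynomials in the variables \<open>S\<close>, so adding cubic monomials in \<open>S\<close> to a cubic changes the
  cubic part of its restriction. Hence at most a \<open>2 ^ - (card S choose 3)\<close> fraction of all
  cubics restrict to degree at most 2 on \<open>A\<close>. Codimension at most \<open>n - n^(3/4)\<close> forces
  \<open>card S \<ge> n^(3/4)\<close>, so each fraction is at most \<open>2 ^ - (n^(9/4) / 27)\<close>, while the pairs
  \<open>(A, S)\<close>, with \<open>A\<close> given by \<open>n\<close> equations, number at most \<open>2 ^ (n\<^sup>2 + 2 n)\<close>. A union
  bound finishes the proof.\<close>

lemma odd_card_sym_diff: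
  assumes "finite A" "finite B"
  shows "odd (card (sym_diff A B)) \<longleftrightarrow> odd (card A) \<noteq> odd (card B)"
proof -
  have "card A = card (A - B) + card (A \<inter> B)" "card B = card (B - A) + card (A \<inter> B)"
    using assms by (metis Int_Diff_disjoint Un_Diff_Int card_Un_disjoint finite_Diff finite_Int
        inf_commute)+
  moreover have "card (sym_diff A B) = card (A - B) + card (B - A)"
    using assms by (intro card_Un_disjoint) auto
  ultimately show ?thesis by presburger
qed

lemma odd_card_inter_sym_diff:
  assumes "finite a"
  shows "odd (card (a \<inter> sym_diff x y)) \<longleftrightarrow> odd (card (a \<inter> x)) \<noteq> odd (card (a \<inter> y))"
proof -
  have "a \<inter> sym_diff x y = sym_diff (a \<inter> x) (a \<inter> y)" by blast
  then show ?thesis using assms by (simp add: odd_card_sym_diff)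
qed

lemma eval_poly_sym_diff:
  assumes "finite P" "finite Q"
  shows "eval_poly (sym_diff P Q) x \<longleftrightarrow> eval_poly P x \<noteq> eval_poly Q x"
proof -
  have "{m \<in> sym_diff P Q. m \<subseteq> x} = sym_diff {m \<in> P. m \<subseteq> x} {m \<in> Q. m \<subseteq> x}" by blast
  then show ?thesis using assms unfolding eval_poly_def by (simp add: odd_card_sym_diff)
qed

lemma anf_coeff_xor:
  assumes "finite m"
  shows "anf_coeff (\<lambda>y. f y \<noteq> g y) m \<longleftrightarrow> anf_coeff f m \<noteq> anf_coeff g m"
proof -
  have "{y. y \<subseteq> m \<and> f y \<noteq> g y} = sym_diff {y. y \<subseteq> m \<and> f y} {y. y \<subseteq> m \<and> g y}" by blast
  then show ?thesis using assms unfolding anf_coeff_def by (simp add: odd_card_sym_diff)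
qed

lemma anf_coeff_cong:
  assumes "\<And>y. y \<subseteq> m \<Longrightarrow> f y = g y"
  shows "anf_coeff f m = anf_coeff g m"
proof -
  have "{y. y \<subseteq> m \<and> f y} = {y. y \<subseteq> m \<and> g y}" using assms by auto
  then show ?thesis unfolding anf_coeff_def by simp
qed

lemma card_supsets_within:
  assumes "finite m" "q \<subseteq> m"
  shows "card {y. q \<subseteq> y \<and> y \<subseteq> m} = 2 ^ card (m - q)"
proof -
  have "bij_betw (\<lambda>z. z \<union> q) (Pow (m - q)) {y. q \<subseteq> y \<and> y \<subseteq> m}"
    by (rule bij_betw_byWitness[where f' = "\<lambda>y. y - q"]) (use assms in auto)
  then show ?thesis using assms by (simp add: bij_betw_same_card[symmetric] card_Pow)
qed

text \<open>Moebius inversion over GF(2): the sum over \<open>y \<subseteq> m\<close> counts each monomial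
  \<open>q \<subseteq> m\<close> of \<open>Q\<close> exactly \<open>2 ^ card (m - q)\<close> times, an odd number only for \<open>q = m\<close>.\<close>
lemma anf_coeff_eval_poly:
  assumes "finite m"
  shows "anf_coeff (eval_poly Q) m \<longleftrightarrow> m \<in> Q"
proof -
  define Qm where "Qm = {q \<in> Q. q \<subseteq> m}"
  have fin: "finite (Pow m)" "finite Qm" using assms by (auto simp: Qm_def)
  have "{q \<in> Q. q \<subseteq> y} = {q \<in> Qm. q \<subseteq> y}" if "y \<subseteq> m" for y
    using that by (auto simp: Qm_def)
  then have "anf_coeff (eval_poly Q) m \<longleftrightarrow> odd (card {y \<in> Pow m. odd (card {q \<in> Qm. q \<subseteq> y})})"
    unfolding anf_coeff_def eval_poly_def
    by (intro arg_cong[where f = "\<lambda>Y. odd (card Y)"]) auto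
  also have "\<dots> \<longleftrightarrow> odd (\<Sum>y\<in>Pow m. card {q \<in> Qm. q \<subseteq> y})"
    using fin by (simp add: even_sum_iff)
  also have "(\<Sum>y\<in>Pow m. card {q \<in> Qm. q \<subseteq> y}) = (\<Sum>q\<in>Qm. card {y \<in> Pow m. q \<subseteq> y})"
    using sum.swap_restrict[OF fin, of "\<lambda>_ _. 1::nat" "\<lambda>y q. q \<subseteq> y"] by simp
  also have "\<dots> = (\<Sum>q\<in>Qm. 2 ^ card (m - q))"
    using assms card_supsets_within by (intro sum.cong) (auto simp: Qm_def conj_commute)
  also have "odd \<dots> \<longleftrightarrow> odd (card {q \<in> Qm. q = m})"
  proof -
    have "odd ((2::nat) ^ card (m - q)) \<longleftrightarrow> q = m" if "q \<subseteq> m" for q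
      using that assms by (auto simp: card_eq_0_iff)
    then have "{q \<in> Qm. odd ((2::nat) ^ card (m - q))} = {q \<in> Qm. q = m}"
      by (auto simp: Qm_def)
    then show ?thesis using fin(2) by (simp add: even_sum_iff)
  qed
  also have "{q \<in> Qm. q = m} = (if m \<in> Q then {m} else {})" by (auto simp: Qm_def)
  finally show ?thesis by simp
qed

definition free_coords :: "nat set set \<Rightarrow> nat set \<Rightarrow> bool" where
  "free_coords A S \<longleftrightarrow> (\<forall>y \<subseteq> S. \<exists>!x. x \<in> A \<and> x \<inter> S = y)"

definition restr_fun :: "nat set set \<Rightarrow> nat set set \<Rightarrow> nat set \<Rightarrow> nat set \<Rightarrow> bool" where
  "restr_fun P A S = (\<lambda>y. eval_poly P (THE x. x \<in> A \<and> x \<inter> S = y))"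

lemma restr_deg_le_iff:
  "restr_deg_le n P A d \<longleftrightarrow> (\<exists>S \<subseteq> {..<n}. free_coords A S \<and> fun_deg_le S (restr_fun P A S) d)"
  unfolding restr_deg_le_def free_coords_def restr_fun_def ..

lemma restr_fun_sym_diff:
  assumes "finite P" "finite Q"
  shows "restr_fun (sym_diff P Q) A S y \<longleftrightarrow> restr_fun P A S y \<noteq> restr_fun Q A S y"
  using assms by (simp add: restr_fun_def eval_poly_sym_diff)

lemma restr_fun_free_poly:
  assumes "free_coords A S" "y \<subseteq> S" "\<forall>q\<in>Q. q \<subseteq> S"
  shows "restr_fun Q A S y = eval_poly Q y"
proof -
  define x where "x = (THE x. x \<in> A \<and> x \<inter> S = y)"
  have "\<exists>!x. x \<in> A \<and> x \<inter> S = y" using assms(1,2) unfolding free_coords_def by blast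
  then have "x \<in> A \<and> x \<inter> S = y" unfolding x_def by (rule theI')
  then have "{q \<in> Q. q \<subseteq> x} = {q \<in> Q. q \<subseteq> y}" using assms(3) by blast
  then show ?thesis unfolding restr_fun_def eval_poly_def x_def by simp
qed

lemma anf_coeff_restr_fun_sym_diff:
  assumes "free_coords A S" "finite P" "finite Q" "\<forall>q\<in>Q. q \<subseteq> S" "m \<subseteq> S" "finite m"
  shows "anf_coeff (restr_fun (sym_diff P Q) A S) m \<longleftrightarrow> anf_coeff (restr_fun P A S) m \<noteq> (m \<in> Q)"
proof -
  have "anf_coeff (restr_fun (sym_diff P Q) A S) m
      = anf_coeff (\<lambda>y. restr_fun P A S y \<noteq> eval_poly Q y) m"
    using assms by (intro anf_coeff_cong) (auto simp: restr_fun_sym_diff restr_fun_free_poly)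
  also have "\<dots> \<longleftrightarrow> anf_coeff (restr_fun P A S) m \<noteq> anf_coeff (eval_poly Q) m"
    using assms(6) by (rule anf_coeff_xor)
  finally show ?thesis using assms(6) by (simp add: anf_coeff_eval_poly)
qed

text \<open>Adding to a polynomial a set \<open>Q\<close> of degree \<open>d + 1\<close> monomials in the free coordinates
  flips exactly the top ANF coefficients of the restriction indexed by \<open>Q\<close>, so the map
  \<open>(P, Q) \<mapsto> P + Q\<close> is injective on pairs with \<open>P\<close> of restricted degree at most \<open>d\<close>.\<close>
lemma card_restr_deg_le_polys:
  assumes "S \<subseteq> {..<n}" "free_coords A S"
  shows "card {P \<in> polys_deg_le n (Suc d). fun_deg_le S (restr_fun P A S) d}
           * 2 ^ (card S choose Suc d) \<le> card (polys_deg_le n (Suc d))"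
proof -
  define G where "G = {P \<in> polys_deg_le n (Suc d). fun_deg_le S (restr_fun P A S) d}"
  define M where "M = {m. m \<subseteq> {..<n} \<and> card m \<le> Suc d}"
  define T where "T = {m. m \<subseteq> S \<and> card m = Suc d}"
  have "finite M" by (rule finite_subset[of _ "Pow {..<n}"]) (auto simp: M_def)
  have "finite S" using assms(1) finite_subset by blast
  have "T \<subseteq> M" using assms(1) by (auto simp: T_def M_def)
  then have "finite T" using \<open>finite M\<close> finite_subset by blast
  have polys: "polys_deg_le n (Suc d) = Pow M" by (simp add: polys_deg_le_def M_def)
  have "G \<subseteq> Pow M" by (auto simp: G_def polys)
  have no_top: "Q = {}" if "P \<in> G" "sym_diff P Q \<in> G" "Q \<subseteq> T" for P Q
  proof (rule ccontr)
    assume "Q \<noteq> {}"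
    then obtain m where "m \<in> Q" by blast
    with \<open>Q \<subseteq> T\<close> have m: "m \<subseteq> S" "card m = Suc d" by (auto simp: T_def)
    have "finite P" "finite Q"
      using that \<open>G \<subseteq> Pow M\<close> \<open>T \<subseteq> M\<close> \<open>finite M\<close> by (auto intro: finite_subset)
    moreover have "finite m" using m(1) \<open>finite S\<close> finite_subset by blast
    moreover have "\<forall>q\<in>Q. q \<subseteq> S" using \<open>Q \<subseteq> T\<close> by (auto simp: T_def)
    ultimately have "anf_coeff (restr_fun (sym_diff P Q) A S) m
        \<longleftrightarrow> anf_coeff (restr_fun P A S) m \<noteq> (m \<in> Q)"
      using assms(2) m(1) by (intro anf_coeff_restr_fun_sym_diff)
    with that(1,2) m \<open>m \<in> Q\<close> show False by (auto simp: G_def fun_deg_le_def)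
  qed
  have "inj_on (\<lambda>(P, Q). sym_diff P Q) (G \<times> Pow T)"
  proof (rule inj_onI, clarsimp)
    fix P Q P' Q'
    assume "P \<in> G" "Q \<subseteq> T" "P' \<in> G" "Q' \<subseteq> T" and eq: "sym_diff P Q = sym_diff P' Q'"
    have "sym_diff P (sym_diff Q Q') = P'" using eq by blast
    moreover have "sym_diff Q Q' \<subseteq> T" using \<open>Q \<subseteq> T\<close> \<open>Q' \<subseteq> T\<close> by blast
    ultimately have "sym_diff Q Q' = {}" using no_top[of P "sym_diff Q Q'"] \<open>P \<in> G\<close> \<open>P' \<in> G\<close> by simp
    then have "Q = Q'" by blast
    then show "P = P' \<and> Q = Q'" using eq by blast
  qed
  moreover have "(\<lambda>(P, Q). sym_diff P Q) ` (G \<times> Pow T) \<subseteq> Pow M"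
    using \<open>G \<subseteq> Pow M\<close> \<open>T \<subseteq> M\<close> by auto
  ultimately have "card (G \<times> Pow T) \<le> card (Pow M)"
    using \<open>finite M\<close> by (intro card_inj_on_le) auto
  moreover have "card T = card S choose Suc d"
    using \<open>finite S\<close> by (simp add: T_def n_subsets)
  ultimately show ?thesis
    using \<open>finite T\<close> by (simp add: G_def polys card_cartesian_product card_Pow)
qed

lemma free_coords_bij_betw:
  assumes "free_coords A S"
  shows "bij_betw (\<lambda>x. x \<inter> S) A (Pow S)"
proof (rule bij_betw_imageI)
  have unique: "\<exists>!x. x \<in> A \<and> x \<inter> S = y" if "y \<subseteq> S" for y
    using assms that unfolding free_coords_def by blast
  show "inj_on (\<lambda>x. x \<inter> S) A"
  proof (rule inj_onI)
    fix x x' assume "x \<in> A" "x' \<in> A" "x \<inter> S = x' \<inter> S"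
    with unique[of "x \<inter> S"] show "x = x'" by (metis Int_lower2)
  qed
  show "(\<lambda>x. x \<inter> S) ` A = Pow S"
  proof
    show "Pow S \<subseteq> (\<lambda>x. x \<inter> S) ` A"
    proof
      fix y assume "y \<in> Pow S"
      with unique[of y] obtain x where "x \<in> A" "x \<inter> S = y" by auto
      then show "y \<in> (\<lambda>x. x \<inter> S) ` A" by blast
    qed
  qed auto
qed

text \<open>The syndrome map \<open>\<sigma>\<close> is additive, so \<open>x\<close> is recovered from \<open>\<sigma> x\<close> together with
  the point \<open>x + c + x\<^sub>0\<close> of \<open>A\<close>, where \<open>c\<close> is a fixed point of syndrome \<open>\<sigma> x\<close>.\<close>
lemma card_points_le_affine:
  assumes "affine_codim_le n k A"
  shows "2 ^ n \<le> card A * 2 ^ k"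
proof -
  obtain a b where "A \<noteq> {}" and a: "\<forall>j<k. a j \<subseteq> {..<n}"
    and A: "A = {x \<in> points n. \<forall>j<k. odd (card (a j \<inter> x)) = b j}"
    using assms unfolding affine_codim_le_def by blast
  obtain x\<^sub>0 where "x\<^sub>0 \<in> A" using \<open>A \<noteq> {}\<close> by blast
  define \<sigma> where "\<sigma> x = {j. j < k \<and> odd (card (a j \<inter> x))}" for x
  define c where "c v = (SOME z. z \<in> points n \<and> \<sigma> z = v)" for v
  define \<psi> where "\<psi> x = (sym_diff (sym_diff x (c (\<sigma> x))) x\<^sub>0, \<sigma> x)" for x
  have parity: "odd (card (a j \<inter> sym_diff x y)) \<longleftrightarrow> odd (card (a j \<inter> x)) \<noteq> odd (card (a j \<inter> y))"
    if "j < k" for j x y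
    using a that by (intro odd_card_inter_sym_diff) (auto intro: finite_subset)
  have c: "c (\<sigma> x) \<in> points n \<and> \<sigma> (c (\<sigma> x)) = \<sigma> x" if "x \<in> points n" for x
    unfolding c_def by (rule someI[of _ x]) (use that in blast)
  have "\<psi> x \<in> A \<times> Pow {..<k}" if "x \<in> points n" for x
  proof -
    have "sym_diff (sym_diff x (c (\<sigma> x))) x\<^sub>0 \<in> points n"
      using c[OF that] that \<open>x\<^sub>0 \<in> A\<close> A by (auto simp: points_def)
    moreover have "odd (card (a j \<inter> sym_diff (sym_diff x (c (\<sigma> x))) x\<^sub>0)) = b j" if "j < k" for j
    proof -
      have "odd (card (a j \<inter> c (\<sigma> x))) = odd (card (a j \<inter> x))"
        using c[OF \<open>x \<in> points n\<close>] that unfolding \<sigma>_def by blast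
      then show ?thesis using parity[OF that] \<open>x\<^sub>0 \<in> A\<close> A that by auto
    qed
    ultimately show ?thesis unfolding \<psi>_def using A by (auto simp: \<sigma>_def)
  qed
  then have "\<psi> ` points n \<subseteq> A \<times> Pow {..<k}" by blast
  moreover have "inj_on \<psi> (points n)"
  proof (rule inj_onI)
    fix x x' assume "\<psi> x = \<psi> x'"
    then have "\<sigma> x = \<sigma> x'" "sym_diff (sym_diff x (c (\<sigma> x))) x\<^sub>0 = sym_diff (sym_diff x' (c (\<sigma> x))) x\<^sub>0"
      unfolding \<psi>_def by auto
    then show "x = x'" by blast
  qed
  moreover have "finite A" using A by (auto simp: points_def intro: finite_subset)
  ultimately have "card (points n) \<le> card (A \<times> Pow {..<k})"
    by (intro card_inj_on_le) simp_all
  then show ?thesis by (simp add: points_def card_Pow card_cartesian_product)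
qed

lemma card_free_coords_ge:
  assumes "affine_codim_le n k A" "finite S" "free_coords A S"
  shows "n \<le> card S + k"
proof -
  have "card A = 2 ^ card S"
    using bij_betw_same_card[OF free_coords_bij_betw[OF assms(3)]] assms(2) by (simp add: card_Pow)
  then have "(2::nat) ^ n \<le> 2 ^ (card S + k)"
    using card_points_le_affine[OF assms(1)] by (simp add: power_add)
  then show ?thesis by simp
qed

text \<open>Every affine subspace of codimension at most \<open>n\<close> is the solution set of a system of
  exactly \<open>n\<close> equations \<open>(a, b)\<close>, meaning \<open>(\<Sum>i\<in>a. x i) = b\<close>; shorter systems are padded
  with the trivial equation \<open>({}, False)\<close>.\<close>
definition affine_systems :: "nat \<Rightarrow> (nat set \<times> bool) list set" where
  "affine_systems n = {L. set L \<subseteq> Pow {..<n} \<times> UNIV \<and> length L = n}"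

definition affine_sol :: "nat \<Rightarrow> (nat set \<times> bool) list \<Rightarrow> nat set set" where
  "affine_sol n L = {x \<in> points n. \<forall>(a, b) \<in> set L. odd (card (a \<inter> x)) = b}"

lemma finite_affine_systems: "finite (affine_systems n)"
  unfolding affine_systems_def by (rule finite_lists_length_eq) simp

lemma card_affine_systems: "card (affine_systems n) = 2 ^ (n * n + n)"
  unfolding affine_systems_def
  by (simp add: card_lists_length_eq card_cartesian_product card_Pow power_add power_mult
      flip: power_Suc2)

lemma affine_codim_le_imp_affine_sol:
  assumes "affine_codim_le n k A" "k \<le> n"
  obtains L where "L \<in> affine_systems n" "A = affine_sol n L"
proof -
  obtain a b where a: "\<forall>j<k. a j \<subseteq> {..<n}"
    and A: "A = {x \<in> points n. \<forall>j<k. odd (card (a j \<inter> x)) = b j}"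
    using assms(1) unfolding affine_codim_le_def by blast
  define L where "L = map (\<lambda>j. if j < k then (a j, b j) else ({}, False)) [0..<n]"
  have "set L = (\<lambda>j. (a j, b j)) ` {..<k} \<union> (if k < n then {({}, False)} else {})"
    using assms(2) unfolding L_def by (auto simp: image_iff)
  then have "L \<in> affine_systems n" "A = affine_sol n L"
    using a unfolding A affine_systems_def affine_sol_def by (auto simp: L_def)
  then show ?thesis by (rule that)
qed

definition large_charts :: "nat \<Rightarrow> ((nat set \<times> bool) list \<times> nat set) set" where
  "large_charts n = {(L, S). L \<in> affine_systems n \<and> S \<subseteq> {..<n} \<and>
     free_coords (affine_sol n L) S \<and> real n powr (3/4) \<le> real (card S)}"

lemma large_charts_subset: "large_charts n \<subseteq> affine_systems n \<times> Pow {..<n}"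
  by (auto simp: large_charts_def)

lemma finite_large_charts: "finite (large_charts n)"
  by (rule finite_subset[OF large_charts_subset]) (simp add: finite_affine_systems)

lemma card_large_charts_le: "card (large_charts n) \<le> 2 ^ (n\<^sup>2 + 2 * n)"
proof -
  have "card (large_charts n) \<le> card (affine_systems n \<times> Pow {..<n})"
    using large_charts_subset finite_affine_systems by (intro card_mono) auto
  also have "\<dots> = 2 ^ (n\<^sup>2 + 2 * n)"
    by (simp add: card_cartesian_product card_affine_systems card_Pow power2_eq_square
        flip: power_add)
  finally show ?thesis .
qed

definition low_restr_cubics :: "nat \<Rightarrow> (nat set \<times> bool) list \<Rightarrow> nat set \<Rightarrow> nat set set set" where
  "low_restr_cubics n L S =
     {P \<in> polys_deg_le n 3. fun_deg_le S (restr_fun P (affine_sol n L) S) 2}"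

lemma bad_cubics_subset_UN_large_charts:
  "bad_cubics n \<subseteq> (\<Union>(L, S) \<in> large_charts n. low_restr_cubics n L S)"
proof
  fix P assume "P \<in> bad_cubics n"
  then obtain k A where P: "P \<in> polys_deg_le n 3" and k: "real k \<le> real n - real n powr (3/4)"
    and A: "affine_codim_le n k A" and "restr_deg_le n P A 2"
    unfolding bad_cubics_def by blast
  then obtain S where S: "S \<subseteq> {..<n}" "free_coords A S" "fun_deg_le S (restr_fun P A S) 2"
    unfolding restr_deg_le_iff by blast
  have "0 \<le> real n powr (3/4)" by simp
  with k have "k \<le> n" by linarith
  with A obtain L where L: "L \<in> affine_systems n" "A = affine_sol n L"
    by (rule affine_codim_le_imp_affine_sol)
  have "n \<le> card S + k"
    using card_free_coords_ge[OF A _ S(2)] S(1) finite_subset by blast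
  with k have "real n powr (3/4) \<le> real (card S)" by linarith
  with S L P show "P \<in> (\<Union>(L, S) \<in> large_charts n. low_restr_cubics n L S)"
    unfolding large_charts_def low_restr_cubics_def by blast
qed

lemma card_low_restr_cubics_le:
  assumes "(L, S) \<in> large_charts n" "3 \<le> real n powr (3/4)"
  shows "real (card (low_restr_cubics n L S)) * 2 powr ((real n powr (3/4) / 3) ^ 3)
           \<le> real (card (polys_deg_le n 3))"
proof -
  have free: "S \<subseteq> {..<n}" "free_coords (affine_sol n L) S"
    and S: "real n powr (3/4) \<le> real (card S)"
    using assms(1) by (auto simp: large_charts_def)
  have "(real n powr (3/4) / 3) ^ 3 \<le> (real (card S) / 3) ^ 3"
    using S assms(2) by (intro power_mono divide_right_mono) auto
  also have "\<dots> \<le> real (card S choose 3)"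
  proof -
    have "real 3 \<le> real (card S)" using S assms(2) by simp
    then show ?thesis using binomial_ge_n_over_k_pow_k[of 3 "card S"] by simp
  qed
  finally have "2 powr ((real n powr (3/4) / 3) ^ 3) \<le> 2 ^ (card S choose 3)"
    by (simp add: powr_realpow[symmetric])
  moreover have "card (low_restr_cubics n L S) * 2 ^ (card S choose 3) \<le> card (polys_deg_le n 3)"
    using card_restr_deg_le_polys[OF free, of 2]
    by (simp add: low_restr_cubics_def numeral_3_eq_3)
  then have "real (card (low_restr_cubics n L S)) * 2 ^ (card S choose 3)
      \<le> real (card (polys_deg_le n 3))"
    by (metis of_nat_le_iff of_nat_mult of_nat_numeral of_nat_power)
  ultimately show ?thesis
    by (meson mult_left_mono of_nat_0_le_iff order_trans)
qed

lemma bad_cubics_ratio_le: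
  assumes "3 \<le> real n powr (3/4)"
  shows "real (card (bad_cubics n)) / real (card (polys_deg_le n 3))
           \<le> 2 powr (real n ^ 2 + 2 * real n - (real n powr (3/4) / 3) ^ 3)"
proof -
  define g where "g = (real n powr (3/4) / 3) ^ 3"
  define G where "G = (\<lambda>(L, S). low_restr_cubics n L S)"
  define N where "N = real (card (polys_deg_le n 3))"
  have "finite (polys_deg_le n 3)"
    unfolding polys_deg_le_def by (auto intro: finite_subset[of _ "Pow {..<n}"])
  moreover have "{} \<in> polys_deg_le n 3" by (simp add: polys_deg_le_def)
  ultimately have "0 < N" unfolding N_def by (auto simp: card_gt_0_iff)
  have G_le: "real (card (G c)) \<le> N * 2 powr - g" if "c \<in> large_charts n" for c
    using that card_low_restr_cubics_le[of _ _ n, OF _ assms]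
    by (cases c) (simp add: G_def N_def g_def powr_minus field_simps)
  have "(\<Union>c \<in> large_charts n. G c) \<subseteq> polys_deg_le n 3"
    by (auto simp: G_def low_restr_cubics_def)
  then have "card (bad_cubics n) \<le> card (\<Union>c \<in> large_charts n. G c)"
    using bad_cubics_subset_UN_large_charts \<open>finite (polys_deg_le n 3)\<close>
    unfolding G_def by (intro card_mono) (auto intro: finite_subset)
  then have "real (card (bad_cubics n)) \<le> real (card (\<Union>c \<in> large_charts n. G c))"
    by simp
  also have "\<dots> \<le> (\<Sum>c \<in> large_charts n. real (card (G c)))"
    using card_UN_le[OF finite_large_charts, of G] by (simp flip: of_nat_sum)
  also have "\<dots> \<le> real (card (large_charts n)) * (N * 2 powr - g)"
    using G_le by (rule sum_bounded_above)
  also have "\<dots> \<le> 2 ^ (n\<^sup>2 + 2 * n) * (N * 2 powr - g)"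
    using card_large_charts_le[of n] \<open>0 < N\<close>
    by (intro mult_right_mono) (simp_all flip: of_nat_le_iff)
  also have "\<dots> = N * 2 powr (real n ^ 2 + 2 * real n - g)"
    by (simp add: powr_realpow[symmetric] powr_diff powr_minus field_simps)
  finally show ?thesis using \<open>0 < N\<close> unfolding g_def N_def by (simp add: divide_le_eq mult.commute)
qed

theorem mainTheorem10:
  shows "\<exists>c>0. \<exists>N. \<forall>n\<ge>N.
     real (card (bad_cubics n)) / real (card (polys_deg_le n 3)) \<le> 2 powr (- c * (real n)^2)"
proof -
  have "\<forall>\<^sub>F x in at_top. 3 \<le> (x::real) powr (3/4)" by real_asymp
  moreover have "\<forall>\<^sub>F x in at_top. (x::real) ^ 2 + 2 * x - (x powr (3/4) / 3) ^ 3 \<le> - 1 * x ^ 2"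
    by real_asymp
  ultimately have "\<forall>\<^sub>F n in sequentially. 3 \<le> real n powr (3/4) \<and>
      real n ^ 2 + 2 * real n - (real n powr (3/4) / 3) ^ 3 \<le> - 1 * real n ^ 2"
    by (intro eventually_compose_filterlim[OF _ filterlim_real_sequentially] eventually_conj)
  then obtain N where N: "\<And>n. n \<ge> N \<Longrightarrow> 3 \<le> real n powr (3/4) \<and>
      real n ^ 2 + 2 * real n - (real n powr (3/4) / 3) ^ 3 \<le> - 1 * real n ^ 2"
    unfolding eventually_sequentially by blast
  have "real (card (bad_cubics n)) / real (card (polys_deg_le n 3)) \<le> 2 powr (- 1 * (real n)^2)"
    if "n \<ge> N" for n
    using bad_cubics_ratio_le[of n] N[OF that] by (meson order_trans powr_mono one_le_numeral)
  then show ?thesis by (intro exI[of _ 1]) auto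
qed

end
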